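(* If $\Delta;\Gamma\vdash M:A$ in DCC, then $\Gamma^\circ\vdash M^\circ:A^\circ$ in CC.
   Context: DCC: expressions $x\mid U_i\mid\Pi x{:}A.B\mid L@M\mid\ell_i\{\overline M\}$ (label names $\ell_i$, lists $\overline M$); type contexts $\Gamma::=\cdot\mid\Gamma,x{:}A$; label contexts $\Delta::=\cdot\mid\Delta,\ell_i(\{\overline x{:}\overline A\},x{:}A\mapsto L:B)$; substitution with $\ell\{\overline M\}[N/x]=\ell\{\overline{M[N/x]}\}$; reduction $\Delta\vdash\ell\{\overline M\}@N\triangleright L[\overline M/\overline x,N/x]$ for $\ell(\{\overline x{:}\overline A\},x{:}A\mapsto L:B)\in\Delta$; equivalence $\Delta\vdash M\equiv N$: common reduct, or $\Delta\vdash L\triangleright^*\ell\{\overline N\}$, $\Delta\vdash M\triangleright^*M'$, $\ell(\{\overline x{:}\overline A\},x{:}A\mapsto N:B)\in\Delta$, $\Delta\vdash N[\overline N/\overline x]\equiv M'@x$ give $\Delta\vdash L\equiv M$, and symmetrically. Typing/formation (mutual): variables from a well-formed context, $U_i:U_{i+1}$, $\Pi x{:}A.B:U_{\max(i,j)}$, $M@N:B[N/x]$ for $M:\Pi x{:}A.B$, $N:A$, conversion along $\equiv$ to a type $B:U_i$, and: if $\vdash\Delta;\Gamma$, $\ell(\{\overline x{:}\overline A\},x{:}A\mapsto M:B)\in\Delta$, $|\overline M|=|\overline x|$, $\Delta;\Gamma\vdash M_k:A_k[M_1/x_1,\dots,M_{k-1}/x_{k-1}]$ for all $k$, then $\Delta;\Gamma\vdash\ell\{\overline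 M\}:\Pi x{:}A[\overline M/\overline x].B[\overline M/\overline x]$; $\vdash\cdot;\cdot$; fresh label entries may be added when $\Delta;\overline x{:}\overline A\vdash\Pi x{:}A.B:U_i$ and $\Delta;\overline x{:}\overline A,x{:}A\vdash M:B$; $\vdash\Delta;\Gamma,\Delta;\Gamma\vdash A:U_i\Rightarrow\vdash\Delta;\Gamma,x{:}A$. CC: expressions $x\mid U_i\mid\Pi x{:}A.B\mid L\,M\mid\lambda x{:}A.M$ with standard typing rules (variable, $U_i:U_{i+1}$, $\Pi$ in $U_{\max(i,j)}$, $M\,N:B[N/x]$, $\lambda x{:}A.M:\Pi x{:}A.B$ for $M:B$ under $x{:}A$, conversion along $\beta\eta$-equivalence). Backward transformation (relative to $\Delta$, on well-typed terms): $x^\circ=x$, $U_i^\circ=U_i$, $(\Pi x{:}A.B)^\circ=\Pi x{:}A^\circ.B^\circ$, $(M@N)^\circ=M^\circ\,N^\circ$, $(\ell\{\overline M\})^\circ=\lambda x{:}A^\circ[\overline{M^\circ}/\overline x].\,L^\circ[\overline{M^\circ}/\overline x]$ where $\ell(\{\overline x{:}\overline A\},x{:}A\mapsto L:B)\in\Delta$; pointwise on type contexts: $(\Gamma,x{:}A)^\circ=\Gamma^\circ,x{:}A^\circ$. *)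

theory Defs
  imports Main
begin

text \<open>Locally nameless is avoided: both DCC and CC are represented with de Bruijn
indices. A context is a list whose head is the most recently bound variable
(index 0).  Label names are natural numbers.\<close>

datatype dtm = DVar nat | DU nat | DPi dtm dtm | DApp dtm dtm | DLab nat "dtm list"

text \<open>Label declaration ell({x1:A1,...,xn:An}, x:A |-> L : B).
 largs = [A1,...,An] (telescope; A_k lives in the context x_{k-1},...,x_1);
 ldom = A lives in x_n,...,x_1; lbody = L and lcod = B live in x,x_n,...,x_1.\<close>
datatype ldecl = LDecl (lname: nat) (largs: "dtm list") (ldom: dtm) (lbody: dtm) (lcod: dtm)

fun dlift :: "nat \<Rightarrow> dtm \<Rightarrow> dtm" where
  "dlift k (DVar i) = (if i < k then DVar i else DVar (Suc i))"
| "dlift k (DU i) = DU i"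
| "dlift k (DPi A B) = DPi (dlift k A) (dlift (Suc k) B)"
| "dlift k (DApp M N) = DApp (dlift k M) (dlift k N)"
| "dlift k (DLab l Ms) = DLab l (map (dlift k) Ms)"

definition dup :: "(nat \<Rightarrow> dtm) \<Rightarrow> nat \<Rightarrow> dtm" where
  "dup \<sigma> i = (case i of 0 \<Rightarrow> DVar 0 | Suc j \<Rightarrow> dlift 0 (\<sigma> j))"

fun dsubst :: "(nat \<Rightarrow> dtm) \<Rightarrow> dtm \<Rightarrow> dtm" where
  "dsubst \<sigma> (DVar i) = \<sigma> i"
| "dsubst \<sigma> (DU i) = DU i"
| "dsubst \<sigma> (DPi A B) = DPi (dsubst \<sigma> A) (dsubst (dup \<sigma>) B)"
| "dsubst \<sigma> (DApp M N) = DApp (dsubst \<sigma> M) (dsubst \<sigma> N)"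
| "dsubst \<sigma> (DLab l Ms) = DLab l (map (dsubst \<sigma>) Ms)"

text \<open>instantiate the innermost |ts| variables: index i < |ts| becomes ts!i,
the others are shifted down.\<close>
definition dsub_of :: "dtm list \<Rightarrow> nat \<Rightarrow> dtm" where
  "dsub_of ts i = (if i < length ts then ts ! i else DVar (i - length ts))"

definition dinst :: "dtm list \<Rightarrow> dtm \<Rightarrow> dtm" where
  "dinst ts t = dsubst (dsub_of ts) t"

text \<open>L[Ms/xs, N/x] for a label body L is  dinst (N # rev Ms) L.\<close>
inductive dstep :: "ldecl list \<Rightarrow> dtm \<Rightarrow> dtm \<Rightarrow> bool" for \<Delta> where
  d_beta: "d \<in> set \<Delta> \<Longrightarrow> length Ms = length (largs d) \<Longrightarrow>
     dstep \<Delta> (DApp (DLab (lname d) Ms) N) (dinst (N # rev Ms) (lbody d))"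
| d_pi1: "dstep \<Delta> A A' \<Longrightarrow> dstep \<Delta> (DPi A B) (DPi A' B)"
| d_pi2: "dstep \<Delta> B B' \<Longrightarrow> dstep \<Delta> (DPi A B) (DPi A B')"
| d_app1: "dstep \<Delta> M M' \<Longrightarrow> dstep \<Delta> (DApp M N) (DApp M' N)"
| d_app2: "dstep \<Delta> N N' \<Longrightarrow> dstep \<Delta> (DApp M N) (DApp M N')"
| d_lab: "dstep \<Delta> M M' \<Longrightarrow> dstep \<Delta> (DLab l (xs @ M # ys)) (DLab l (xs @ M' # ys))"

abbreviation dsteps :: "ldecl list \<Rightarrow> dtm \<Rightarrow> dtm \<Rightarrow> bool" where
  "dsteps \<Delta> \<equiv> (dstep \<Delta>)\<^sup>*\<^sup>*"

text \<open>N[Ns/xs] for a label body N (leaving x free, x = index 0) is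
  dsubst (dup (dsub_of (rev Ns))) N; and M'@x is DApp (dlift 0 M') (DVar 0).\<close>
inductive dequiv :: "ldecl list \<Rightarrow> dtm \<Rightarrow> dtm \<Rightarrow> bool" for \<Delta> where
  eq_red: "dsteps \<Delta> M P \<Longrightarrow> dsteps \<Delta> N P \<Longrightarrow> dequiv \<Delta> M N"
| eq_eta1: "dsteps \<Delta> L (DLab (lname d) Ns) \<Longrightarrow> dsteps \<Delta> M M' \<Longrightarrow> d \<in> set \<Delta> \<Longrightarrow>
    length Ns = length (largs d) \<Longrightarrow>
    dequiv \<Delta> (dsubst (dup (dsub_of (rev Ns))) (lbody d)) (DApp (dlift 0 M') (DVar 0)) \<Longrightarrow>
    dequiv \<Delta> L M"
| eq_eta2: "dsteps \<Delta> L (DLab (lname d) Ns) \<Longrightarrow> dsteps \<Delta> M M' \<Longrightarrow> d \<in> set \<Delta> \<Longrightarrow>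
    length Ns = length (largs d) \<Longrightarrow>
    dequiv \<Delta> (DApp (dlift 0 M') (DVar 0)) (dsubst (dup (dsub_of (rev Ns))) (lbody d)) \<Longrightarrow>
    dequiv \<Delta> M L"

inductive dwf :: "ldecl list \<Rightarrow> dtm list \<Rightarrow> bool"
  and dtyp :: "ldecl list \<Rightarrow> dtm list \<Rightarrow> dtm \<Rightarrow> dtm \<Rightarrow> bool" where
  wf_empty: "dwf [] []"
| wf_label: "dwf \<Delta> [] \<Longrightarrow> l \<notin> lname ` set \<Delta> \<Longrightarrow>
    dtyp \<Delta> (rev As) (DPi A B) (DU i) \<Longrightarrow> dtyp \<Delta> (A # rev As) L B \<Longrightarrow>
    dwf (LDecl l As A L B # \<Delta>) []"
| wf_cons: "dwf \<Delta> \<Gamma> \<Longrightarrow> dtyp \<Delta> \<Gamma> A (DU i) \<Longrightarrow> dwf \<Delta> (A # \<Gamma>)"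
| t_var: "dwf \<Delta> \<Gamma> \<Longrightarrow> i < length \<Gamma> \<Longrightarrow> dtyp \<Delta> \<Gamma> (DVar i) ((dlift 0 ^^ Suc i) (\<Gamma> ! i))"
| t_univ: "dwf \<Delta> \<Gamma> \<Longrightarrow> dtyp \<Delta> \<Gamma> (DU i) (DU (Suc i))"
| t_pi: "dtyp \<Delta> \<Gamma> A (DU i) \<Longrightarrow> dtyp \<Delta> (A # \<Gamma>) B (DU j) \<Longrightarrow>
    dtyp \<Delta> \<Gamma> (DPi A B) (DU (max i j))"
| t_app: "dtyp \<Delta> \<Gamma> M (DPi A B) \<Longrightarrow> dtyp \<Delta> \<Gamma> N A \<Longrightarrow> dtyp \<Delta> \<Gamma> (DApp M N) (dinst [N] B)"
| t_conv: "dtyp \<Delta> \<Gamma> M A \<Longrightarrow> dequiv \<Delta> A B \<Longrightarrow> dtyp \<Delta> \<Gamma> B (DU i) \<Longrightarrow> dtyp \<Delta> \<Gamma> M B"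
| t_lab: "dwf \<Delta> \<Gamma> \<Longrightarrow> d \<in> set \<Delta> \<Longrightarrow> length Ms = length (largs d) \<Longrightarrow>
    (\<forall>k < length Ms. dtyp \<Delta> \<Gamma> (Ms ! k) (dinst (rev (take k Ms)) (largs d ! k))) \<Longrightarrow>
    dtyp \<Delta> \<Gamma> (DLab (lname d) Ms) (dinst (rev Ms) (DPi (ldom d) (lcod d)))"

section \<open>CC syntax, reduction, typing\<close>

datatype ctm = CVar nat | CU nat | CPi ctm ctm | CApp ctm ctm | CLam ctm ctm

fun clift :: "nat \<Rightarrow> ctm \<Rightarrow> ctm" where
  "clift k (CVar i) = (if i < k then CVar i else CVar (Suc i))"
| "clift k (CU i) = CU i"
| "clift k (CPi A B) = CPi (clift k A) (clift (Suc k) B)"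
| "clift k (CApp M N) = CApp (clift k M) (clift k N)"
| "clift k (CLam A M) = CLam (clift k A) (clift (Suc k) M)"

definition cup :: "(nat \<Rightarrow> ctm) \<Rightarrow> nat \<Rightarrow> ctm" where
  "cup \<sigma> i = (case i of 0 \<Rightarrow> CVar 0 | Suc j \<Rightarrow> clift 0 (\<sigma> j))"

fun csubst :: "(nat \<Rightarrow> ctm) \<Rightarrow> ctm \<Rightarrow> ctm" where
  "csubst \<sigma> (CVar i) = \<sigma> i"
| "csubst \<sigma> (CU i) = CU i"
| "csubst \<sigma> (CPi A B) = CPi (csubst \<sigma> A) (csubst (cup \<sigma>) B)"
| "csubst \<sigma> (CApp M N) = CApp (csubst \<sigma> M) (csubst \<sigma> N)"
| "csubst \<sigma> (CLam A M) = CLam (csubst \<sigma> A) (csubst (cup \<sigma>) M)"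

definition csub_of :: "ctm list \<Rightarrow> nat \<Rightarrow> ctm" where
  "csub_of ts i = (if i < length ts then ts ! i else CVar (i - length ts))"

definition cinst :: "ctm list \<Rightarrow> ctm \<Rightarrow> ctm" where
  "cinst ts t = csubst (csub_of ts) t"

inductive cstep :: "ctm \<Rightarrow> ctm \<Rightarrow> bool" where
  c_beta: "cstep (CApp (CLam A M) N) (cinst [N] M)"
| c_eta: "cstep (CLam A (CApp (clift 0 M) (CVar 0))) M"
| c_pi1: "cstep A A' \<Longrightarrow> cstep (CPi A B) (CPi A' B)"
| c_pi2: "cstep B B' \<Longrightarrow> cstep (CPi A B) (CPi A B')"
| c_app1: "cstep M M' \<Longrightarrow> cstep (CApp M N) (CApp M' N)"
| c_app2: "cstep N N' \<Longrightarrow> cstep (CApp M N) (CApp M N')"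
| c_lam1: "cstep A A' \<Longrightarrow> cstep (CLam A M) (CLam A' M)"
| c_lam2: "cstep M M' \<Longrightarrow> cstep (CLam A M) (CLam A M')"

abbreviation cequiv :: "ctm \<Rightarrow> ctm \<Rightarrow> bool" where
  "cequiv \<equiv> equivclp cstep"

inductive cwf :: "ctm list \<Rightarrow> bool"
  and ctyp :: "ctm list \<Rightarrow> ctm \<Rightarrow> ctm \<Rightarrow> bool" where
  cwf_empty: "cwf []"
| cwf_cons: "cwf \<Gamma> \<Longrightarrow> ctyp \<Gamma> A (CU i) \<Longrightarrow> cwf (A # \<Gamma>)"
| ct_var: "cwf \<Gamma> \<Longrightarrow> i < length \<Gamma> \<Longrightarrow> ctyp \<Gamma> (CVar i) ((clift 0 ^^ Suc i) (\<Gamma> ! i))"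
| ct_univ: "cwf \<Gamma> \<Longrightarrow> ctyp \<Gamma> (CU i) (CU (Suc i))"
| ct_pi: "ctyp \<Gamma> A (CU i) \<Longrightarrow> ctyp (A # \<Gamma>) B (CU j) \<Longrightarrow> ctyp \<Gamma> (CPi A B) (CU (max i j))"
| ct_app: "ctyp \<Gamma> M (CPi A B) \<Longrightarrow> ctyp \<Gamma> N A \<Longrightarrow> ctyp \<Gamma> (CApp M N) (cinst [N] B)"
| ct_lam: "ctyp (A # \<Gamma>) M B \<Longrightarrow> ctyp \<Gamma> (CLam A M) (CPi A B)"
| ct_conv: "ctyp \<Gamma> M A \<Longrightarrow> cequiv A B \<Longrightarrow> ctyp \<Gamma> B (CU i) \<Longrightarrow> ctyp \<Gamma> M B"

section \<open>Backward transformation\<close>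

fun lookup :: "nat \<Rightarrow> ldecl list \<Rightarrow> (ldecl \<times> ldecl list) option" where
  "lookup l [] = None"
| "lookup l (d # \<Delta>) = (if lname d = l then Some (d, \<Delta>) else lookup l \<Delta>)"

lemma lookup_shorter: "lookup l \<Delta> = Some (d, \<Delta>') \<Longrightarrow> length \<Delta>' < length \<Delta>"
  by (induction \<Delta>) (auto split: if_splits)

function bwd :: "ldecl list \<Rightarrow> dtm \<Rightarrow> ctm" where
  "bwd \<Delta> (DVar i) = CVar i"
| "bwd \<Delta> (DU i) = CU i"
| "bwd \<Delta> (DPi A B) = CPi (bwd \<Delta> A) (bwd \<Delta> B)"
| "bwd \<Delta> (DApp M N) = CApp (bwd \<Delta> M) (bwd \<Delta> N)"
| "bwd \<Delta> (DLab l Ms) = (case lookup l \<Delta> of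
      None \<Rightarrow> undefined
    | Some (d, \<Delta>') \<Rightarrow> cinst (rev (map (bwd \<Delta>) Ms)) (CLam (bwd \<Delta>' (ldom d)) (bwd \<Delta>' (lbody d))))"
  by pat_completeness auto
termination
  apply (relation "measures [\<lambda>(\<Delta>, t). length \<Delta>, \<lambda>(\<Delta>, t). size t]")
  apply (auto dest: lookup_shorter simp: less_Suc_eq_le intro: size_list_estimation')
  done

end

theory Submission
  imports Defs
begin

(* The translation turns a label application ell{Ms} @ N into a beta-redex, and the label
   rules of DCC equivalence into eta-conversions, so DCC reduction and equivalence are mapped
   into beta-eta-conversion of CC.  The translation of ell{Ms} is the lambda-term of ell's
   declaration with the translated Ms substituted for the telescope variables.  By induction on
   the label context, that lambda-term has the translated Pi-type over the translated telescope,
   and the CC substitution lemma types its instance at the instantiated Pi-type.  Translation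
   commutes with lifting and substitution only on terms whose labels are declared with the right
   arity over such a label context, so these invariants are carried through the induction on
   DCC typing. *)

section \<open>Substitution in CC\<close>

definition liftidx :: "nat \<Rightarrow> nat \<Rightarrow> nat" where
  "liftidx k i = (if i < k then i else Suc i)"

lemma cup_CVar [simp]: "cup CVar = CVar"
  by (rule ext) (simp add: cup_def split: nat.split)

lemma csubst_CVar [simp]: "csubst CVar t = t"
  by (induction t) simp_all

lemma clift_clift: "j \<le> k \<Longrightarrow> clift (Suc k) (clift j t) = clift j (clift k t)"
  by (induction t arbitrary: j k) auto

lemma cup_comp_liftidx: "cup \<sigma> \<circ> liftidx (Suc k) = cup (\<sigma> \<circ> liftidx k)"
  by (rule ext) (simp add: cup_def liftidx_def split: nat.split)

lemma csubst_clift: "csubst \<sigma> (clift k t) = csubst (\<sigma> \<circ> liftidx k) t"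
  by (induction t arbitrary: \<sigma> k) (simp_all add: liftidx_def cup_comp_liftidx)

lemma clift_comp_cup: "clift (Suc k) \<circ> cup \<sigma> = cup (clift k \<circ> \<sigma>)"
  by (rule ext) (simp add: cup_def clift_clift split: nat.split)

lemma clift_csubst: "clift k (csubst \<sigma> t) = csubst (clift k \<circ> \<sigma>) t"
  by (induction t arbitrary: \<sigma> k) (simp_all add: clift_comp_cup)

lemma clift_eq_csubst: "clift k t = csubst (CVar \<circ> liftidx k) t"
  using csubst_clift[of CVar k t] by simp

lemma csubst_cup_clift: "csubst (cup \<sigma>) (clift 0 t) = clift 0 (csubst \<sigma> t)"
proof -
  have "cup \<sigma> \<circ> liftidx 0 = clift 0 \<circ> \<sigma>"
    by (rule ext) (simp add: cup_def liftidx_def)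
  then show ?thesis by (simp add: csubst_clift clift_csubst)
qed

lemma csubst_comp_cup: "csubst (cup \<sigma>) \<circ> cup \<tau> = cup (csubst \<sigma> \<circ> \<tau>)"
  by (rule ext) (simp add: cup_def csubst_cup_clift split: nat.split)

lemma csubst_csubst: "csubst \<sigma> (csubst \<tau> t) = csubst (csubst \<sigma> \<circ> \<tau>) t"
  by (induction t arbitrary: \<sigma> \<tau>) (simp_all add: csubst_comp_cup)

lemma clift_funpow_eq_csubst: "(clift 0 ^^ n) t = csubst (\<lambda>i. CVar (i + n)) t"
proof (induction n)
  case (Suc n)
  have "clift 0 \<circ> (\<lambda>i. CVar (i + n)) = (\<lambda>i. CVar (i + Suc n))" by auto
  with Suc show ?case by (simp add: clift_csubst)
qed (simp flip: fun_eq_iff)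

lemma cinst_single_clift: "cinst [s] (clift 0 t) = t"
proof -
  have "csub_of [s] \<circ> liftidx 0 = CVar" by (rule ext) (simp add: csub_of_def liftidx_def)
  then show ?thesis by (simp add: cinst_def csubst_clift)
qed

lemma cinst_Cons: "cinst [s] (csubst (cup (csub_of ts)) t) = cinst (s # ts) t"
proof -
  have "csubst (csub_of [s]) \<circ> cup (csub_of ts) = csub_of (s # ts)"
    by (rule ext) (auto simp: cup_def csub_of_def nth_Cons cinst_single_clift[unfolded cinst_def]
        split: nat.split)
  then show ?thesis by (simp add: cinst_def csubst_csubst)
qed

lemma csubst_cinst_single: "csubst \<sigma> (cinst [s] t) = cinst [csubst \<sigma> s] (csubst (cup \<sigma>) t)"
proof -
  have "csubst \<sigma> \<circ> csub_of [s] = csubst (csub_of [csubst \<sigma> s]) \<circ> cup \<sigma>"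
    by (rule ext) (auto simp: csub_of_def cup_def cinst_single_clift[unfolded cinst_def]
        split: nat.split)
  then show ?thesis by (simp add: cinst_def csubst_csubst)
qed

fun cclosed :: "nat \<Rightarrow> ctm \<Rightarrow> bool" where
  "cclosed n (CVar i) \<longleftrightarrow> i < n"
| "cclosed n (CU i) \<longleftrightarrow> True"
| "cclosed n (CPi A B) \<longleftrightarrow> cclosed n A \<and> cclosed (Suc n) B"
| "cclosed n (CApp M N) \<longleftrightarrow> cclosed n M \<and> cclosed n N"
| "cclosed n (CLam A M) \<longleftrightarrow> cclosed n A \<and> cclosed (Suc n) M"

lemma csubst_cong_cclosed:
  "cclosed n t \<Longrightarrow> (\<And>i. i < n \<Longrightarrow> \<sigma> i = \<tau> i) \<Longrightarrow> csubst \<sigma> t = csubst \<tau> t"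
proof (induction t arbitrary: n \<sigma> \<tau>)
  case (CPi A B)
  have "cup \<sigma> i = cup \<tau> i" if "i < Suc n" for i
    using CPi.prems that by (auto simp: cup_def split: nat.split)
  with CPi show ?case by (metis cclosed.simps(3) csubst.simps(3))
next
  case (CLam A M)
  have "cup \<sigma> i = cup \<tau> i" if "i < Suc n" for i
    using CLam.prems that by (auto simp: cup_def split: nat.split)
  with CLam show ?case by (metis cclosed.simps(5) csubst.simps(5))
next
  case (CApp M N)
  then show ?case by (metis cclosed.simps(4) csubst.simps(4))
qed simp_all

lemma csubst_cinst_cclosed:
  "cclosed (length ts) t \<Longrightarrow> csubst \<sigma> (cinst ts t) = cinst (map (csubst \<sigma>) ts) t"
  unfolding cinst_def csubst_csubst
  by (erule csubst_cong_cclosed) (simp add: csub_of_def)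

section \<open>Beta-eta conversion in CC\<close>

lemma equivclp_map:
  assumes "\<And>x y. r x y \<Longrightarrow> r (f x) (f y)" and "equivclp r a b"
  shows "equivclp r (f a) (f b)"
  using assms(2)
proof (induction rule: equivclp_induct)
  case (step y z)
  then show ?case by (metis assms(1) equivclp_into_equivclp sup2CI conversepI)
qed simp

lemma equivclp_map2:
  assumes "\<And>x x' y. r x x' \<Longrightarrow> r (f x y) (f x' y)" and "\<And>x y y'. r y y' \<Longrightarrow> r (f x y) (f x y')"
    and "equivclp r a a'" and "equivclp r b b'"
  shows "equivclp r (f a b) (f a' b')"
proof -
  have "equivclp r (f a b) (f a' b)" using equivclp_map[of r "\<lambda>x. f x b"] assms by blast
  moreover have "equivclp r (f a' b) (f a' b')" using equivclp_map[of r "f a'"] assms by blast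
  ultimately show ?thesis by (rule equivclp_trans)
qed

lemma cequiv_CPi: "cequiv A A' \<Longrightarrow> cequiv B B' \<Longrightarrow> cequiv (CPi A B) (CPi A' B')"
  by (rule equivclp_map2) (auto intro: c_pi1 c_pi2)

lemma cequiv_CApp: "cequiv M M' \<Longrightarrow> cequiv N N' \<Longrightarrow> cequiv (CApp M N) (CApp M' N')"
  by (rule equivclp_map2) (auto intro: c_app1 c_app2)

lemma cequiv_CLam: "cequiv A A' \<Longrightarrow> cequiv M M' \<Longrightarrow> cequiv (CLam A M) (CLam A' M')"
  by (rule equivclp_map2) (auto intro: c_lam1 c_lam2)

lemma cequiv_eta: "cequiv M (CApp (clift 0 N) (CVar 0)) \<Longrightarrow> cequiv (CLam A M) N"
  by (metis cequiv_CLam equivclp_refl equivclp_trans r_into_equivclp c_eta)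

lemma cstep_csubst: "cstep s t \<Longrightarrow> cstep (csubst \<sigma> s) (csubst \<sigma> t)"
proof (induction arbitrary: \<sigma> rule: cstep.induct)
  case (c_beta A M N)
  show ?case by (simp add: csubst_cinst_single cstep.c_beta)
next
  case (c_eta A M)
  show ?case using cstep.c_eta by (simp add: csubst_cup_clift cup_def)
qed (auto intro: cstep.intros)

lemma cequiv_csubst: "cequiv s t \<Longrightarrow> cequiv (csubst \<sigma> s) (csubst \<sigma> t)"
  by (rule equivclp_map[where r = cstep]) (rule cstep_csubst)

lemma cequiv_csubst_pointwise: "(\<And>i. cequiv (\<sigma> i) (\<tau> i)) \<Longrightarrow> cequiv (csubst \<sigma> t) (csubst \<tau> t)"
proof (induction t arbitrary: \<sigma> \<tau>)
  case (CPi A B)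
  have "cequiv (cup \<sigma> i) (cup \<tau> i)" for i
    using CPi.prems by (auto simp: cup_def clift_eq_csubst cequiv_csubst split: nat.split)
  then show ?case using CPi by (simp add: cequiv_CPi)
next
  case (CLam A M)
  have "cequiv (cup \<sigma> i) (cup \<tau> i)" for i
    using CLam.prems by (auto simp: cup_def clift_eq_csubst cequiv_csubst split: nat.split)
  then show ?case using CLam by (simp add: cequiv_CLam)
qed (simp_all add: cequiv_CApp)

lemma cequiv_cinst_args: "list_all2 cequiv ts us \<Longrightarrow> cequiv (cinst ts t) (cinst us t)"
  unfolding cinst_def
  by (rule cequiv_csubst_pointwise) (auto simp: csub_of_def list_all2_lengthD list_all2_nthD)

section \<open>Renaming and substitution for CC typing\<close>

abbreviation var_type :: "ctm list \<Rightarrow> nat \<Rightarrow> ctm" where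
  "var_type \<Gamma> i \<equiv> (clift 0 ^^ Suc i) (\<Gamma> ! i)"

lemma ctyp_cwf: "ctyp \<Gamma> t T \<Longrightarrow> cwf \<Gamma>"
  by (induction rule: cwf_ctyp.inducts(2)[where ?P1.0 = "\<lambda>_. True"]) (auto elim: cwf.cases)

definition ctx_cclosed :: "ctm list \<Rightarrow> bool" where
  "ctx_cclosed \<Gamma> \<longleftrightarrow> (\<forall>i < length \<Gamma>. cclosed (length \<Gamma> - Suc i) (\<Gamma> ! i))"

lemma ctx_cclosed_Cons: "ctx_cclosed (A # \<Gamma>) \<longleftrightarrow> cclosed (length \<Gamma>) A \<and> ctx_cclosed \<Gamma>"
  by (auto simp: ctx_cclosed_def nth_Cons split: nat.split)

lemma ctyp_cclosed:
  "cwf \<Gamma> \<Longrightarrow> ctx_cclosed \<Gamma>"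
  "ctyp \<Gamma> t T \<Longrightarrow> ctx_cclosed \<Gamma> \<and> cclosed (length \<Gamma>) t"
  by (induction rule: cwf_ctyp.inducts) (auto simp: ctx_cclosed_Cons ctx_cclosed_def[of "[]"])

(* ctyp with the domain of a lambda typed explicitly, so that rule induction provides an
   induction hypothesis for it; ctyp_imp_ctyp' shows the extra premise is derivable. *)
inductive cwf' :: "ctm list \<Rightarrow> bool"
  and ctyp' :: "ctm list \<Rightarrow> ctm \<Rightarrow> ctm \<Rightarrow> bool" where
  cwf'_empty: "cwf' []"
| cwf'_cons: "cwf' \<Gamma> \<Longrightarrow> ctyp' \<Gamma> A (CU i) \<Longrightarrow> cwf' (A # \<Gamma>)"
| ct'_var: "cwf' \<Gamma> \<Longrightarrow> i < length \<Gamma> \<Longrightarrow> ctyp' \<Gamma> (CVar i) (var_type \<Gamma> i)"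
| ct'_univ: "cwf' \<Gamma> \<Longrightarrow> ctyp' \<Gamma> (CU i) (CU (Suc i))"
| ct'_pi: "ctyp' \<Gamma> A (CU i) \<Longrightarrow> ctyp' (A # \<Gamma>) B (CU j) \<Longrightarrow> ctyp' \<Gamma> (CPi A B) (CU (max i j))"
| ct'_app: "ctyp' \<Gamma> M (CPi A B) \<Longrightarrow> ctyp' \<Gamma> N A \<Longrightarrow> ctyp' \<Gamma> (CApp M N) (cinst [N] B)"
| ct'_lam: "ctyp' \<Gamma> A (CU i) \<Longrightarrow> ctyp' (A # \<Gamma>) M B \<Longrightarrow> ctyp' \<Gamma> (CLam A M) (CPi A B)"
| ct'_conv: "ctyp' \<Gamma> M A \<Longrightarrow> cequiv A B \<Longrightarrow> ctyp' \<Gamma> B (CU i) \<Longrightarrow> ctyp' \<Gamma> M B"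

lemma ctyp'_cwf': "ctyp' \<Gamma> t T \<Longrightarrow> cwf' \<Gamma>"
  by (induction rule: cwf'_ctyp'.inducts(2)[where ?P1.0 = "\<lambda>_. True"]) (auto elim: cwf'.cases)

lemma ctyp_imp_ctyp': "cwf \<Gamma> \<Longrightarrow> cwf' \<Gamma>" "ctyp \<Gamma> t T \<Longrightarrow> ctyp' \<Gamma> t T"
proof (induction rule: cwf_ctyp.inducts)
  case (ct_lam A \<Gamma> M B)
  then obtain i where "ctyp' \<Gamma> A (CU i)" by (auto dest: ctyp'_cwf' elim: cwf'.cases)
  with ct_lam show ?case by (blast intro: ct'_lam)
qed (blast intro: cwf'_ctyp'.intros)+

definition cren :: "(nat \<Rightarrow> nat) \<Rightarrow> nat \<Rightarrow> ctm" where
  "cren \<rho> = CVar \<circ> \<rho>"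

definition ren_up :: "(nat \<Rightarrow> nat) \<Rightarrow> nat \<Rightarrow> nat" where
  "ren_up \<rho> i = (case i of 0 \<Rightarrow> 0 | Suc j \<Rightarrow> Suc (\<rho> j))"

lemma cup_cren: "cup (cren \<rho>) = cren (ren_up \<rho>)"
  by (rule ext) (simp add: cup_def cren_def ren_up_def split: nat.split)

definition ren_typed :: "ctm list \<Rightarrow> (nat \<Rightarrow> nat) \<Rightarrow> ctm list \<Rightarrow> bool" where
  "ren_typed \<Gamma> \<rho> \<Theta> \<longleftrightarrow>
     (\<forall>i < length \<Theta>. \<rho> i < length \<Gamma> \<and> var_type \<Gamma> (\<rho> i) = csubst (cren \<rho>) (var_type \<Theta> i))"

lemma ren_typed_up:
  "ren_typed \<Gamma> \<rho> \<Theta> \<Longrightarrow> ren_typed (csubst (cren \<rho>) A # \<Gamma>) (ren_up \<rho>) (A # \<Theta>)"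
  by (auto simp: ren_typed_def ren_up_def nth_Cons cup_cren[symmetric] csubst_cup_clift
      split: nat.split)

lemma ctyp'_rename:
  "ctyp' \<Theta> t T \<Longrightarrow> cwf \<Gamma> \<Longrightarrow> ren_typed \<Gamma> \<rho> \<Theta> \<Longrightarrow>
     ctyp \<Gamma> (csubst (cren \<rho>) t) (csubst (cren \<rho>) T)"
proof (induction arbitrary: \<Gamma> \<rho> rule: cwf'_ctyp'.inducts(2)[where ?P1.0 = "\<lambda>_. True"])
  case (ct'_var \<Theta> i)
  then show ?case by (metis ren_typed_def cren_def comp_apply csubst.simps(1) ct_var)
next
  case (ct'_pi \<Theta> A i B j)
  then have A: "ctyp \<Gamma> (csubst (cren \<rho>) A) (CU i)" by simp
  with ct'_pi have "ctyp (csubst (cren \<rho>) A # \<Gamma>) (csubst (cup (cren \<rho>)) B) (CU j)"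
    by (metis cwf_cons ren_typed_up cup_cren csubst.simps(2))
  with A show ?case by (simp add: ct_pi)
next
  case (ct'_lam \<Theta> A i M B)
  then have "ctyp \<Gamma> (csubst (cren \<rho>) A) (CU i)" by simp
  with ct'_lam have "ctyp (csubst (cren \<rho>) A # \<Gamma>) (csubst (cup (cren \<rho>)) M) (csubst (cup (cren \<rho>)) B)"
    by (metis cwf_cons ren_typed_up cup_cren)
  then show ?case by (simp add: ct_lam)
next
  case (ct'_app \<Theta> M A B N)
  then show ?case by (auto simp: csubst_cinst_single intro!: ct_app)
next
  case (ct'_conv \<Theta> M A B i)
  then show ?case by (metis cequiv_csubst csubst.simps(2) ct_conv)
qed (simp_all add: ct_univ)

lemma ctyp_weaken:
  assumes t: "ctyp \<Gamma> t T" and A: "ctyp \<Gamma> A (CU i)"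
  shows "ctyp (A # \<Gamma>) (clift 0 t) (clift 0 T)"
proof -
  have shift: "cren Suc = CVar \<circ> liftidx 0" by (rule ext) (simp add: cren_def liftidx_def)
  have "cwf (A # \<Gamma>)" using A by (blast intro: cwf_cons ctyp_cwf)
  moreover have "ren_typed (A # \<Gamma>) Suc \<Gamma>" by (simp add: ren_typed_def shift clift_eq_csubst[symmetric])
  ultimately have "ctyp (A # \<Gamma>) (csubst (cren Suc) t) (csubst (cren Suc) T)"
    by (rule ctyp'_rename[OF ctyp_imp_ctyp'(2)[OF t]])
  then show ?thesis by (simp add: shift clift_eq_csubst[symmetric])
qed

definition subst_typed :: "ctm list \<Rightarrow> (nat \<Rightarrow> ctm) \<Rightarrow> ctm list \<Rightarrow> bool" where
  "subst_typed \<Gamma> \<sigma> \<Theta> \<longleftrightarrow> (\<forall>i < length \<Theta>. ctyp \<Gamma> (\<sigma> i) (csubst \<sigma> (var_type \<Theta> i)))"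

lemma subst_typed_cup:
  assumes \<sigma>: "subst_typed \<Gamma> \<sigma> \<Theta>" and A: "ctyp \<Gamma> (csubst \<sigma> A) (CU i)"
  shows "subst_typed (csubst \<sigma> A # \<Gamma>) (cup \<sigma>) (A # \<Theta>)"
  unfolding subst_typed_def
proof (intro allI impI)
  fix k assume k: "k < length (A # \<Theta>)"
  have wf: "cwf (csubst \<sigma> A # \<Gamma>)" using A by (blast intro: cwf_cons ctyp_cwf)
  show "ctyp (csubst \<sigma> A # \<Gamma>) (cup \<sigma> k) (csubst (cup \<sigma>) (var_type (A # \<Theta>) k))"
  proof (cases k)
    case 0
    then show ?thesis using ct_var[OF wf, of 0] by (simp add: csubst_cup_clift cup_def)
  next
    case (Suc j)
    with k \<sigma> have "ctyp \<Gamma> (\<sigma> j) (csubst \<sigma> (var_type \<Theta> j))" by (simp add: subst_typed_def)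
    from ctyp_weaken[OF this A] show ?thesis
      using Suc by (simp add: csubst_cup_clift cup_def)
  qed
qed

lemma ctyp'_subst:
  "ctyp' \<Theta> t T \<Longrightarrow> cwf \<Gamma> \<Longrightarrow> subst_typed \<Gamma> \<sigma> \<Theta> \<Longrightarrow> ctyp \<Gamma> (csubst \<sigma> t) (csubst \<sigma> T)"
proof (induction arbitrary: \<Gamma> \<sigma> rule: cwf'_ctyp'.inducts(2)[where ?P1.0 = "\<lambda>_. True"])
  case (ct'_var \<Theta> i)
  then show ?case by (simp add: subst_typed_def)
next
  case (ct'_pi \<Theta> A i B j)
  then have A: "ctyp \<Gamma> (csubst \<sigma> A) (CU i)" by simp
  with ct'_pi have "ctyp (csubst \<sigma> A # \<Gamma>) (csubst (cup \<sigma>) B) (CU j)"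
    by (metis cwf_cons subst_typed_cup csubst.simps(2))
  with A show ?case by (simp add: ct_pi)
next
  case (ct'_lam \<Theta> A i M B)
  then have "ctyp \<Gamma> (csubst \<sigma> A) (CU i)" by simp
  with ct'_lam have "ctyp (csubst \<sigma> A # \<Gamma>) (csubst (cup \<sigma>) M) (csubst (cup \<sigma>) B)"
    by (metis cwf_cons subst_typed_cup)
  then show ?case by (simp add: ct_lam)
next
  case (ct'_app \<Theta> M A B N)
  then show ?case by (auto simp: csubst_cinst_single intro!: ct_app)
next
  case (ct'_conv \<Theta> M A B i)
  then show ?case by (metis cequiv_csubst csubst.simps(2) ct_conv)
qed (simp_all add: ct_univ)

lemma cinst_rev_clift_funpow:
  assumes "cclosed (length ms - Suc i) t" and "i < length ms"
  shows "cinst (rev ms) ((clift 0 ^^ Suc i) t) = cinst (rev (take (length ms - Suc i) ms)) t"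
proof -
  have "cinst (rev ms) ((clift 0 ^^ Suc i) t) = csubst (\<lambda>j. csub_of (rev ms) (j + Suc i)) t"
    by (simp add: cinst_def clift_funpow_eq_csubst csubst_csubst comp_def del: funpow.simps)
  also have "\<dots> = cinst (rev (take (length ms - Suc i) ms)) t"
    unfolding cinst_def using assms
    by (intro csubst_cong_cclosed) (auto simp: csub_of_def rev_nth min_def add.commute)
  finally show ?thesis .
qed

lemma ctyp_cinst_telescope:
  assumes t: "ctyp (rev As) t T" and \<Gamma>: "cwf \<Gamma>" and len: "length ms = length As"
    and ms: "\<And>k. k < length ms \<Longrightarrow> ctyp \<Gamma> (ms ! k) (cinst (rev (take k ms)) (As ! k))"
  shows "ctyp \<Gamma> (cinst (rev ms) t) (cinst (rev ms) T)"
proof -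
  have closed: "ctx_cclosed (rev As)" using ctyp_cclosed(1)[OF ctyp_cwf[OF t]] .
  have "subst_typed \<Gamma> (csub_of (rev ms)) (rev As)"
    unfolding subst_typed_def
  proof (intro allI impI)
    fix i assume i: "i < length (rev As)"
    \<comment> \<open>variable i of the context rev As is the telescope entry As ! k\<close>
    define k where "k = length ms - Suc i"
    have k: "k < length ms" and As_k: "rev As ! i = As ! k"
      using i len by (auto simp: k_def rev_nth)
    have "cclosed k (rev As ! i)"
      using closed i len by (simp add: ctx_cclosed_def k_def)
    then have "csubst (csub_of (rev ms)) (var_type (rev As) i) = cinst (rev (take k ms)) (As ! k)"
      using cinst_rev_clift_funpow[of ms i] i len As_k by (simp add: cinst_def k_def del: funpow.simps)
    moreover have "csub_of (rev ms) i = ms ! k"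
      using i len by (simp add: csub_of_def rev_nth k_def)
    ultimately show "ctyp \<Gamma> (csub_of (rev ms) i) (csubst (csub_of (rev ms)) (var_type (rev As) i))"
      using ms[OF k] by simp
  qed
  then show ?thesis
    unfolding cinst_def by (rule ctyp'_subst[OF ctyp_imp_ctyp'(2)[OF t] \<Gamma>])
qed

section \<open>Translation of well-labelled DCC terms\<close>

fun wf_labels :: "ldecl list \<Rightarrow> dtm \<Rightarrow> bool" where
  "wf_labels \<Delta> (DVar i) \<longleftrightarrow> True"
| "wf_labels \<Delta> (DU i) \<longleftrightarrow> True"
| "wf_labels \<Delta> (DPi A B) \<longleftrightarrow> wf_labels \<Delta> A \<and> wf_labels \<Delta> B"
| "wf_labels \<Delta> (DApp M N) \<longleftrightarrow> wf_labels \<Delta> M \<and> wf_labels \<Delta> N"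
| "wf_labels \<Delta> (DLab l Ms) \<longleftrightarrow>
     (case lookup l \<Delta> of None \<Rightarrow> False | Some (d, _) \<Rightarrow> length Ms = length (largs d)) \<and>
     (\<forall>M \<in> set Ms. wf_labels \<Delta> M)"

fun lctx_ok :: "ldecl list \<Rightarrow> bool" where
  "lctx_ok [] \<longleftrightarrow> True"
| "lctx_ok (d # \<Delta>) \<longleftrightarrow> lctx_ok \<Delta> \<and> lname d \<notin> lname ` set \<Delta> \<and>
     (\<forall>A \<in> set (largs d). wf_labels \<Delta> A) \<and>
     wf_labels \<Delta> (ldom d) \<and> wf_labels \<Delta> (lbody d) \<and> wf_labels \<Delta> (lcod d) \<and>
     ctyp (map (bwd \<Delta>) (rev (largs d))) (CLam (bwd \<Delta> (ldom d)) (bwd \<Delta> (lbody d)))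
       (CPi (bwd \<Delta> (ldom d)) (bwd \<Delta> (lcod d)))"

lemma lookup_SomeD: "lookup l \<Delta> = Some (d, \<Delta>') \<Longrightarrow> lname d = l \<and> d \<in> set \<Delta>"
  by (induction \<Delta>) (auto split: if_splits)

lemma lookup_lname: "lctx_ok \<Delta> \<Longrightarrow> d \<in> set \<Delta> \<Longrightarrow> \<exists>\<Delta>'. lookup (lname d) \<Delta> = Some (d, \<Delta>')"
  by (induction \<Delta>) auto

lemma lctx_ok_lookup: "lctx_ok \<Delta> \<Longrightarrow> lookup l \<Delta> = Some (d, \<Delta>') \<Longrightarrow> lctx_ok (d # \<Delta>')"
  by (induction \<Delta>) (auto split: if_splits)

lemma bwd_Cons_fresh:
  assumes "lname e \<notin> lname ` set \<Delta>"
  shows "wf_labels \<Delta> t \<Longrightarrow> wf_labels (e # \<Delta>) t \<and> bwd (e # \<Delta>) t = bwd \<Delta> t"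
proof (induction t)
  case (DLab l Ms)
  then obtain d \<Delta>' where lk: "lookup l \<Delta> = Some (d, \<Delta>')"
    by (auto split: option.splits)
  with assms have "lname e \<noteq> l" using lookup_SomeD[OF lk] by auto
  then have lk': "lookup l (e # \<Delta>) = lookup l \<Delta>" by simp
  have "map (bwd (e # \<Delta>)) Ms = map (bwd \<Delta>) Ms" using DLab by auto
  then have "bwd (e # \<Delta>) (DLab l Ms) = bwd \<Delta> (DLab l Ms)" by (simp only: bwd.simps lk')
  with DLab lk lk' show ?case by simp
qed auto

lemma bwd_lookup_tail:
  "lctx_ok \<Delta> \<Longrightarrow> lookup l \<Delta> = Some (d, \<Delta>') \<Longrightarrow> wf_labels \<Delta>' t \<Longrightarrow>
     wf_labels \<Delta> t \<and> bwd \<Delta> t = bwd \<Delta>' t"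
proof (induction \<Delta>)
  case (Cons e \<Delta>)
  then have fresh: "lname e \<notin> lname ` set \<Delta>" by simp
  show ?case
  proof (cases "lname e = l")
    case True
    with Cons.prems show ?thesis using bwd_Cons_fresh[OF fresh] by auto
  next
    case False
    with Cons show ?thesis using bwd_Cons_fresh[OF fresh] by auto
  qed
qed simp

lemma lookup_cclosed:
  "lctx_ok \<Delta> \<Longrightarrow> lookup l \<Delta> = Some (d, \<Delta>') \<Longrightarrow>
     cclosed (length (largs d)) (CLam (bwd \<Delta>' (ldom d)) (bwd \<Delta>' (lbody d)))"
  using lctx_ok_lookup ctyp_cclosed(2) by fastforce

lemma bwd_DLab_map:
  assumes \<Delta>: "lctx_ok \<Delta>" and Ms: "wf_labels \<Delta> (DLab l Ms)"
    and f: "\<And>M. M \<in> set Ms \<Longrightarrow> bwd \<Delta> (f M) = csubst \<tau> (bwd \<Delta> M)"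
  shows "bwd \<Delta> (DLab l (map f Ms)) = csubst \<tau> (bwd \<Delta> (DLab l Ms))"
proof -
  obtain d \<Delta>' where lk: "lookup l \<Delta> = Some (d, \<Delta>')" and len: "length Ms = length (largs d)"
    using Ms by (auto split: option.splits)
  let ?C = "CLam (bwd \<Delta>' (ldom d)) (bwd \<Delta>' (lbody d))"
  have "bwd \<Delta> (DLab l (map f Ms)) = cinst (rev (map (csubst \<tau> \<circ> bwd \<Delta>) Ms)) ?C"
    using lk f by (simp cong: map_cong)
  also have "\<dots> = csubst \<tau> (cinst (rev (map (bwd \<Delta>) Ms)) ?C)"
    using lookup_cclosed[OF \<Delta> lk] len by (simp add: csubst_cinst_cclosed rev_map)
  also have "\<dots> = csubst \<tau> (bwd \<Delta> (DLab l Ms))"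
    using lk by simp
  finally show ?thesis .
qed

lemma wf_labels_dlift [simp]: "wf_labels \<Delta> (dlift k t) = wf_labels \<Delta> t"
  by (induction t arbitrary: k) (auto split: option.splits)

lemma bwd_dlift: "lctx_ok \<Delta> \<Longrightarrow> wf_labels \<Delta> t \<Longrightarrow> bwd \<Delta> (dlift k t) = clift k (bwd \<Delta> t)"
proof (induction t arbitrary: k)
  case (DLab l Ms)
  have "bwd \<Delta> (DLab l (map (dlift k) Ms)) = csubst (CVar \<circ> liftidx k) (bwd \<Delta> (DLab l Ms))"
    by (rule bwd_DLab_map) (use DLab in \<open>auto simp: clift_eq_csubst\<close>)
  then show ?case by (simp only: dlift.simps clift_eq_csubst)
qed auto

lemma wf_labels_dup: "(\<And>i. wf_labels \<Delta> (\<sigma> i)) \<Longrightarrow> wf_labels \<Delta> (dup \<sigma> i)"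
  by (simp add: dup_def split: nat.split)

lemma bwd_dup:
  "lctx_ok \<Delta> \<Longrightarrow> (\<And>i. wf_labels \<Delta> (\<sigma> i)) \<Longrightarrow> bwd \<Delta> (dup \<sigma> i) = cup (\<lambda>j. bwd \<Delta> (\<sigma> j)) i"
  by (simp add: dup_def cup_def bwd_dlift split: nat.split)

lemma wf_labels_dsubst: "wf_labels \<Delta> t \<Longrightarrow> (\<And>i. wf_labels \<Delta> (\<sigma> i)) \<Longrightarrow> wf_labels \<Delta> (dsubst \<sigma> t)"
  by (induction t arbitrary: \<sigma>) (auto simp: wf_labels_dup split: option.splits)

lemma bwd_dsubst:
  "lctx_ok \<Delta> \<Longrightarrow> wf_labels \<Delta> t \<Longrightarrow> (\<And>i. wf_labels \<Delta> (\<sigma> i)) \<Longrightarrow>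
     bwd \<Delta> (dsubst \<sigma> t) = csubst (\<lambda>i. bwd \<Delta> (\<sigma> i)) (bwd \<Delta> t)"
proof (induction t arbitrary: \<sigma>)
  case (DPi A B)
  then show ?case by (simp add: wf_labels_dup bwd_dup)
next
  case (DLab l Ms)
  have "bwd \<Delta> (DLab l (map (dsubst \<sigma>) Ms)) = csubst (\<lambda>i. bwd \<Delta> (\<sigma> i)) (bwd \<Delta> (DLab l Ms))"
    by (rule bwd_DLab_map) (use DLab in auto)
  then show ?case by simp
qed auto

lemma bwd_dsub_of: "(\<lambda>i. bwd \<Delta> (dsub_of ts i)) = csub_of (map (bwd \<Delta>) ts)"
  by (rule ext) (simp add: dsub_of_def csub_of_def)

lemma wf_labels_dsub_of: "\<forall>s \<in> set ts. wf_labels \<Delta> s \<Longrightarrow> wf_labels \<Delta> (dsub_of ts i)"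
  by (simp add: dsub_of_def)

lemma wf_labels_dinst: "wf_labels \<Delta> t \<Longrightarrow> \<forall>s \<in> set ts. wf_labels \<Delta> s \<Longrightarrow> wf_labels \<Delta> (dinst ts t)"
  by (simp add: dinst_def wf_labels_dsub_of wf_labels_dsubst)

lemma bwd_dinst:
  "lctx_ok \<Delta> \<Longrightarrow> wf_labels \<Delta> t \<Longrightarrow> \<forall>s \<in> set ts. wf_labels \<Delta> s \<Longrightarrow>
     bwd \<Delta> (dinst ts t) = cinst (map (bwd \<Delta>) ts) (bwd \<Delta> t)"
  by (simp add: dinst_def cinst_def wf_labels_dsub_of bwd_dsubst bwd_dsub_of)

lemma wf_labels_dlift_funpow [simp]: "wf_labels \<Delta> ((dlift 0 ^^ n) t) = wf_labels \<Delta> t"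
  by (induction n) auto

lemma bwd_dlift_funpow:
  "lctx_ok \<Delta> \<Longrightarrow> wf_labels \<Delta> t \<Longrightarrow> bwd \<Delta> ((dlift 0 ^^ n) t) = (clift 0 ^^ n) (bwd \<Delta> t)"
  by (induction n) (auto simp: bwd_dlift)

section \<open>Translation of reduction, equivalence and typing\<close>

lemma bwd_DLab_eq_CLam:
  assumes "lookup l \<Delta> = Some (d, \<Delta>')"
  shows "bwd \<Delta> (DLab l Ms) =
    CLam (csubst (csub_of (rev (map (bwd \<Delta>) Ms))) (bwd \<Delta>' (ldom d)))
      (csubst (cup (csub_of (rev (map (bwd \<Delta>) Ms)))) (bwd \<Delta>' (lbody d)))"
  using assms by (simp add: cinst_def)

lemma lookup_lbody:
  assumes "lctx_ok \<Delta>" and "lookup l \<Delta> = Some (d, \<Delta>')"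
  shows "wf_labels \<Delta> (lbody d) \<and> bwd \<Delta> (lbody d) = bwd \<Delta>' (lbody d)"
  using assms lctx_ok_lookup[OF assms] by (simp add: bwd_lookup_tail)

lemma bwd_dstep:
  "dstep \<Delta> s t \<Longrightarrow> lctx_ok \<Delta> \<Longrightarrow> wf_labels \<Delta> s \<Longrightarrow> wf_labels \<Delta> t \<and> cequiv (bwd \<Delta> s) (bwd \<Delta> t)"
proof (induction rule: dstep.induct)
  case (d_beta d Ms N)
  obtain \<Delta>' where lk: "lookup (lname d) \<Delta> = Some (d, \<Delta>')"
    using lookup_lname[OF d_beta.prems(1) d_beta.hyps(1)] by blast
  have body: "wf_labels \<Delta> (lbody d)" "bwd \<Delta> (lbody d) = bwd \<Delta>' (lbody d)"
    using lookup_lbody[OF d_beta.prems(1) lk] by auto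
  have args: "\<forall>s \<in> set (N # rev Ms). wf_labels \<Delta> s" using d_beta.prems(2) by auto
  let ?\<tau> = "csub_of (rev (map (bwd \<Delta>) Ms))"
  have "cstep (bwd \<Delta> (DApp (DLab (lname d) Ms) N))
      (cinst [bwd \<Delta> N] (csubst (cup ?\<tau>) (bwd \<Delta>' (lbody d))))"
    by (simp add: bwd_DLab_eq_CLam[OF lk] c_beta del: bwd.simps(5))
  also have "cinst [bwd \<Delta> N] (csubst (cup ?\<tau>) (bwd \<Delta>' (lbody d))) = bwd \<Delta> (dinst (N # rev Ms) (lbody d))"
    using body args by (simp add: cinst_Cons bwd_dinst d_beta.prems(1) rev_map)
  finally show ?case using wf_labels_dinst[OF body(1) args] by (blast intro: r_into_equivclp)
next
  case (d_lab M M' l xs ys)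
  then obtain d \<Delta>' where lk: "lookup l \<Delta> = Some (d, \<Delta>')"
    by (auto split: option.splits)
  have "list_all2 cequiv (rev (map (bwd \<Delta>) (xs @ M # ys))) (rev (map (bwd \<Delta>) (xs @ M' # ys)))"
    using d_lab by (simp add: list_all2_appendI list.rel_refl list_all2_map1 list_all2_map2 list_all2_rev)
  then show ?case using d_lab lk by (simp add: cequiv_cinst_args)
qed (auto intro: cequiv_CPi cequiv_CApp)

lemma bwd_dsteps:
  "dsteps \<Delta> s t \<Longrightarrow> lctx_ok \<Delta> \<Longrightarrow> wf_labels \<Delta> s \<Longrightarrow> wf_labels \<Delta> t \<and> cequiv (bwd \<Delta> s) (bwd \<Delta> t)"
  by (induction rule: rtranclp_induct) (auto dest: bwd_dstep intro: equivclp_trans)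

lemma bwd_DLab_eta_body:
  assumes \<Delta>: "lctx_ok \<Delta>" and d: "d \<in> set \<Delta>" and Ns: "wf_labels \<Delta> (DLab (lname d) Ns)"
  defines "body \<equiv> dsubst (dup (dsub_of (rev Ns))) (lbody d)"
  shows "wf_labels \<Delta> body \<and> (\<exists>A. bwd \<Delta> (DLab (lname d) Ns) = CLam A (bwd \<Delta> body))"
proof -
  obtain \<Delta>' where lk: "lookup (lname d) \<Delta> = Some (d, \<Delta>')"
    using lookup_lname[OF \<Delta> d] by blast
  have L: "wf_labels \<Delta> (lbody d)" "bwd \<Delta> (lbody d) = bwd \<Delta>' (lbody d)"
    using lookup_lbody[OF \<Delta> lk] by auto
  have \<sigma>: "wf_labels \<Delta> (dsub_of (rev Ns) i)" for i
    using Ns by (simp add: wf_labels_dsub_of)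
  have "wf_labels \<Delta> body"
    unfolding body_def using L \<sigma> by (simp add: wf_labels_dsubst wf_labels_dup)
  moreover have "bwd \<Delta> body = csubst (cup (csub_of (rev (map (bwd \<Delta>) Ns)))) (bwd \<Delta>' (lbody d))"
    unfolding body_def using \<Delta> L \<sigma>
    by (simp add: bwd_dsubst wf_labels_dup bwd_dup bwd_dsub_of rev_map)
  ultimately show ?thesis by (simp add: bwd_DLab_eq_CLam[OF lk] del: bwd.simps(5))
qed

lemma bwd_dequiv_eta:
  assumes \<Delta>: "lctx_ok \<Delta>" and "d \<in> set \<Delta>"
    and L: "dsteps \<Delta> L (DLab (lname d) Ns)" "wf_labels \<Delta> L"
    and M: "dsteps \<Delta> M M'" "wf_labels \<Delta> M"
    and IH: "wf_labels \<Delta> (dsubst (dup (dsub_of (rev Ns))) (lbody d)) \<Longrightarrow>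
      wf_labels \<Delta> (DApp (dlift 0 M') (DVar 0)) \<Longrightarrow>
      cequiv (bwd \<Delta> (dsubst (dup (dsub_of (rev Ns))) (lbody d))) (bwd \<Delta> (DApp (dlift 0 M') (DVar 0)))"
  shows "cequiv (bwd \<Delta> L) (bwd \<Delta> M)"
proof -
  have L': "wf_labels \<Delta> (DLab (lname d) Ns)" "cequiv (bwd \<Delta> L) (bwd \<Delta> (DLab (lname d) Ns))"
    using bwd_dsteps[OF L(1) \<Delta> L(2)] by auto
  have M': "wf_labels \<Delta> M'" "cequiv (bwd \<Delta> M) (bwd \<Delta> M')"
    using bwd_dsteps[OF M(1) \<Delta> M(2)] by auto
  obtain A where body: "wf_labels \<Delta> (dsubst (dup (dsub_of (rev Ns))) (lbody d))"
    and lam: "bwd \<Delta> (DLab (lname d) Ns) = CLam A (bwd \<Delta> (dsubst (dup (dsub_of (rev Ns))) (lbody d)))"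
    using bwd_DLab_eta_body[OF \<Delta> \<open>d \<in> set \<Delta>\<close> L'(1)] by blast
  have "cequiv (bwd \<Delta> (DLab (lname d) Ns)) (bwd \<Delta> M')"
    unfolding lam using IH[OF body] M'(1) \<Delta> by (simp add: bwd_dlift cequiv_eta)
  with L'(2) M'(2) show ?thesis by (meson equivclp_trans equivclp_sym)
qed

lemma bwd_dequiv:
  "dequiv \<Delta> L M \<Longrightarrow> lctx_ok \<Delta> \<Longrightarrow> wf_labels \<Delta> L \<Longrightarrow> wf_labels \<Delta> M \<Longrightarrow>
     cequiv (bwd \<Delta> L) (bwd \<Delta> M)"
proof (induction rule: dequiv.induct)
  case (eq_red M P N)
  then show ?case using bwd_dsteps by (meson equivclp_trans equivclp_sym)
next
  case (eq_eta1 L d Ns M M')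
  then show ?case by (blast intro: bwd_dequiv_eta)
next
  case (eq_eta2 L d Ns M M')
  then have "cequiv (bwd \<Delta> L) (bwd \<Delta> M)" by (blast intro: bwd_dequiv_eta equivclp_sym)
  then show ?case by (rule equivclp_sym)
qed

lemma ctyp_bwd_DLab:
  assumes \<Delta>: "lctx_ok \<Delta>" and \<Gamma>: "cwf (map (bwd \<Delta>) \<Gamma>)" and d: "d \<in> set \<Delta>"
    and len: "length Ms = length (largs d)"
    and Ms: "\<And>k. k < length Ms \<Longrightarrow> wf_labels \<Delta> (Ms ! k) \<and>
      ctyp (map (bwd \<Delta>) \<Gamma>) (bwd \<Delta> (Ms ! k)) (bwd \<Delta> (dinst (rev (take k Ms)) (largs d ! k)))"
  defines "T \<equiv> dinst (rev Ms) (DPi (ldom d) (lcod d))"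
  shows "wf_labels \<Delta> (DLab (lname d) Ms) \<and> wf_labels \<Delta> T \<and>
    ctyp (map (bwd \<Delta>) \<Gamma>) (bwd \<Delta> (DLab (lname d) Ms)) (bwd \<Delta> T)"
proof -
  obtain \<Delta>' where lk: "lookup (lname d) \<Delta> = Some (d, \<Delta>')"
    using lookup_lname[OF \<Delta> d] by blast
  have decl: "lctx_ok (d # \<Delta>')" using lctx_ok_lookup[OF \<Delta> lk] .
  have tail: "wf_labels \<Delta> t \<and> bwd \<Delta> t = bwd \<Delta>' t" if "wf_labels \<Delta>' t" for t
    using bwd_lookup_tail[OF \<Delta> lk that] .
  have Ms_wf: "\<forall>M \<in> set Ms. wf_labels \<Delta> M" using Ms by (auto simp: in_set_conv_nth)
  let ?ms = "map (bwd \<Delta>) Ms" and ?As = "map (bwd \<Delta>') (largs d)"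
  have "ctyp (map (bwd \<Delta>) \<Gamma>) (cinst (rev ?ms) (CLam (bwd \<Delta>' (ldom d)) (bwd \<Delta>' (lbody d))))
      (cinst (rev ?ms) (CPi (bwd \<Delta>' (ldom d)) (bwd \<Delta>' (lcod d))))"
  proof (rule ctyp_cinst_telescope[of ?As])
    show "ctyp (rev ?As) (CLam (bwd \<Delta>' (ldom d)) (bwd \<Delta>' (lbody d)))
        (CPi (bwd \<Delta>' (ldom d)) (bwd \<Delta>' (lcod d)))"
      using decl by (simp add: rev_map)
  next
    fix k assume k: "k < length ?ms"
    have "wf_labels \<Delta> (largs d ! k) \<and> bwd \<Delta> (largs d ! k) = bwd \<Delta>' (largs d ! k)"
      using decl k len by (intro tail) simp
    moreover have "\<forall>s \<in> set (rev (take k Ms)). wf_labels \<Delta> s"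
      using Ms_wf by (auto dest: in_set_takeD)
    ultimately have "bwd \<Delta> (dinst (rev (take k Ms)) (largs d ! k)) = cinst (rev (take k ?ms)) (?As ! k)"
      using \<Delta> k len by (simp add: bwd_dinst rev_map take_map)
    then show "ctyp (map (bwd \<Delta>) \<Gamma>) (?ms ! k) (cinst (rev (take k ?ms)) (?As ! k))"
      using Ms[of k] k by simp
  qed (use \<Gamma> len in simp_all)
  moreover have "wf_labels \<Delta> (DPi (ldom d) (lcod d)) \<and>
      bwd \<Delta> (DPi (ldom d) (lcod d)) = CPi (bwd \<Delta>' (ldom d)) (bwd \<Delta>' (lcod d))"
    using decl tail by simp
  ultimately show ?thesis
    using \<Delta> lk len Ms_wf unfolding T_def by (simp add: wf_labels_dinst bwd_dinst rev_map)
qed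

lemma bwd_typing:
  "dwf \<Delta> \<Gamma> \<Longrightarrow> lctx_ok \<Delta> \<and> (\<forall>A \<in> set \<Gamma>. wf_labels \<Delta> A) \<and> cwf (map (bwd \<Delta>) \<Gamma>)"
  "dtyp \<Delta> \<Gamma> M A \<Longrightarrow> lctx_ok \<Delta> \<and> (\<forall>A \<in> set \<Gamma>. wf_labels \<Delta> A) \<and> cwf (map (bwd \<Delta>) \<Gamma>) \<and>
     wf_labels \<Delta> M \<and> wf_labels \<Delta> A \<and> ctyp (map (bwd \<Delta>) \<Gamma>) (bwd \<Delta> M) (bwd \<Delta> A)"
proof (induction rule: dwf_dtyp.inducts)
  case (wf_label \<Delta> l As A B i L)
  then show ?case by (auto simp: cwf_empty intro: ct_lam)
next
  case (t_var \<Delta> \<Gamma> i)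
  then show ?case
    using ct_var[of "map (bwd \<Delta>) \<Gamma>" i] by (simp add: bwd_dlift_funpow del: funpow.simps)
next
  case (t_app \<Delta> \<Gamma> M A B N)
  then show ?case by (auto simp: wf_labels_dinst bwd_dinst intro: ct_app)
next
  case (t_conv \<Delta> \<Gamma> M A B i)
  then show ?case using bwd_dequiv ct_conv by fastforce
next
  case (t_lab \<Delta> \<Gamma> d Ms)
  then show ?case using ctyp_bwd_DLab[of \<Delta> \<Gamma> d Ms] by blast
qed (auto intro: cwf_ctyp.intros)

theorem lemma3p22:
  assumes "dtyp \<Delta> \<Gamma> M A"
  shows "ctyp (map (bwd \<Delta>) \<Gamma>) (bwd \<Delta> M) (bwd \<Delta> A)"
  using bwd_typing(2)[OF assms] by blast

end
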